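(* Let $\Delta$ be a noncommutative discrete valuation ring with uniformiser $\pi$ and finite residue field $k=\Delta/(\pi)$. Let $n,r\ge1$ and let $1\le c_1\le c_2\le\cdots\le c_r\le n$ be integers. For $i\in\{1,\ldots,n\}$ let $M_i\subseteq\Delta^{r}$ (row vectors) be the left $\Delta$-submodule of vectors whose $s$-th entry lies in $\Delta$ if $i\le c_s$ and in $\pi\Delta$ if $i>c_s$; thus $M_1=\Delta^r\supseteq M_2\supseteq\cdots\supseteq M_n\supseteq\pi M_1$. For a finite colength left $\Delta$-submodule $X\subseteq M_1$ let $M_j(X)=(X\cap M_j)/\pi X$ for $j=1,\ldots,n$ and $M_{n+1}(X)=0$, giving a filtered $k$-vector space $M_*X: M_1(X)\supseteq\cdots\supseteq M_n(X)\supseteq M_{n+1}(X)=0$. Let $X_1\subseteq M_1$ be a finite colength submodule and $Y_1=X_1+\pi M_1$. Then $M_*X_1\cong M_*Y_1$ as filtered vector spaces.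
   Context: A noncommutative discrete valuation ring is a domain $\Delta$ with a normal regular element $\pi$ (uniformiser) such that $\pi\Delta=\Delta\pi$ is the Jacobson radical and $\Delta/(\pi)$ is a division ring, here assumed finite (hence a finite field $k$). Since $\pi\Delta=\Delta\pi$, each $M_j(X)$ is a $k$-vector space. An isomorphism of filtered vector spaces $V_*\to V'_*$ is a $k$-linear isomorphism $V_1\to V'_1$ mapping each $V_j$ onto $V'_j$. *)

theory Defs
  imports Main
begin

definition left_ideal :: "'a::ring_1 set \<Rightarrow> bool" where
  "left_ideal I \<longleftrightarrow> 0 \<in> I \<and> (\<forall>x\<in>I. \<forall>y\<in>I. x + y \<in> I) \<and> (\<forall>x\<in>I. - x \<in> I)
     \<and> (\<forall>a. \<forall>x\<in>I. a * x \<in> I)"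

definition maximal_left_ideal :: "'a::ring_1 set \<Rightarrow> bool" where
  "maximal_left_ideal I \<longleftrightarrow> left_ideal I \<and> I \<noteq> UNIV \<and>
     (\<forall>J. left_ideal J \<and> I \<subseteq> J \<longrightarrow> J = I \<or> J = UNIV)"

definition jacobson_radical :: "'a::ring_1 set" where
  "jacobson_radical = \<Inter> {I. maximal_left_ideal I}"

definition pideal :: "'a::ring_1 \<Rightarrow> 'a set" where
  "pideal p = range (\<lambda>x. p * x)"

definition quotient_division_ring :: "'a::ring_1 \<Rightarrow> bool" where
  "quotient_division_ring p \<longleftrightarrow> 1 \<notin> pideal p \<and>
     (\<forall>x. x \<notin> pideal p \<longrightarrow> (\<exists>y. x * y - 1 \<in> pideal p \<and> y * x - 1 \<in> pideal p))"

definition residue_classes :: "'a::ring_1 \<Rightarrow> 'a set set" where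
  "residue_classes p = (\<lambda>x. (\<lambda>i. x + i) ` pideal p) ` UNIV"

text \<open>The type is the domain \<open>\<Delta>\<close>; \<open>p\<close> is the uniformiser \<open>\<pi>\<close>.\<close>
definition nc_dvr :: "'a::ring_1_no_zero_divisors \<Rightarrow> bool" where
  "nc_dvr p \<longleftrightarrow> p \<noteq> 0
     \<and> range (\<lambda>x. p * x) = range (\<lambda>x. x * p)
     \<and> jacobson_radical = pideal p
     \<and> quotient_division_ring p"

definition vecs :: "nat \<Rightarrow> (nat \<Rightarrow> 'a::ring_1) set" where
  "vecs r = {v. \<forall>s\<ge>r. v s = 0}"

definition vadd :: "(nat \<Rightarrow> 'a::ring_1) \<Rightarrow> (nat \<Rightarrow> 'a) \<Rightarrow> nat \<Rightarrow> 'a" where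
  "vadd v w = (\<lambda>s. v s + w s)"

definition vsmult :: "'a::ring_1 \<Rightarrow> (nat \<Rightarrow> 'a) \<Rightarrow> nat \<Rightarrow> 'a" where
  "vsmult a v = (\<lambda>s. a * v s)"

definition left_submodule :: "nat \<Rightarrow> (nat \<Rightarrow> 'a::ring_1) set \<Rightarrow> bool" where
  "left_submodule r X \<longleftrightarrow> X \<subseteq> vecs r \<and> (\<lambda>_. 0) \<in> X
     \<and> (\<forall>x\<in>X. \<forall>y\<in>X. vadd x y \<in> X) \<and> (\<forall>a. \<forall>x\<in>X. vsmult a x \<in> X)"

definition vcoset :: "(nat \<Rightarrow> 'a::ring_1) set \<Rightarrow> (nat \<Rightarrow> 'a) \<Rightarrow> (nat \<Rightarrow> 'a) set" where
  "vcoset P v = (\<lambda>x. vadd v x) ` P"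

definition finite_colength :: "nat \<Rightarrow> (nat \<Rightarrow> 'a::ring_1) set \<Rightarrow> bool" where
  "finite_colength r X \<longleftrightarrow> finite (vcoset X ` vecs r)"

definition pimod :: "'a::ring_1 \<Rightarrow> (nat \<Rightarrow> 'a) set \<Rightarrow> (nat \<Rightarrow> 'a) set" where
  "pimod p X = vsmult p ` X"

definition Mlat :: "'a::ring_1 \<Rightarrow> nat \<Rightarrow> (nat \<Rightarrow> nat) \<Rightarrow> nat \<Rightarrow> (nat \<Rightarrow> 'a) set" where
  "Mlat p r c i = {v \<in> vecs r. \<forall>s<r. c s < i \<longrightarrow> v s \<in> pideal p}"

definition Mquot :: "'a::ring_1 \<Rightarrow> nat \<Rightarrow> (nat \<Rightarrow> nat) \<Rightarrow> (nat \<Rightarrow> 'a) set \<Rightarrow> nat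
    \<Rightarrow> (nat \<Rightarrow> 'a) set set" where
  "Mquot p r c X j = vcoset (pimod p X) ` (X \<inter> Mlat p r c j)"

text \<open>Isomorphism of the filtered \<open>k\<close>-vector spaces \<open>M_*X \<cong> M_*Y\<close>: a bijection
  \<open>F : M_1(X) \<rightarrow> M_1(Y)\<close> which is additive and compatible with scalars (the
  action of \<open>\<Delta>\<close> on \<open>X/\<pi>X\<close> factors through \<open>k = \<Delta>/(\<pi>)\<close>, so this is
  \<open>k\<close>-linearity), and maps each \<open>M_j(X)\<close> onto \<open>M_j(Y)\<close>, \<open>1 \<le> j \<le> n\<close>
  (the term \<open>M_{n+1} = 0\<close> is automatic).\<close>
definition filtered_iso :: "'a::ring_1 \<Rightarrow> nat \<Rightarrow> (nat \<Rightarrow> nat) \<Rightarrow> nat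
    \<Rightarrow> (nat \<Rightarrow> 'a) set \<Rightarrow> (nat \<Rightarrow> 'a) set \<Rightarrow> bool" where
  "filtered_iso p r c n X Y \<longleftrightarrow>
    (\<exists>F. bij_betw F (Mquot p r c X 1) (Mquot p r c Y 1)
      \<and> (\<forall>x1\<in>X. \<forall>x2\<in>X. \<forall>y1\<in>Y. \<forall>y2\<in>Y.
            F (vcoset (pimod p X) x1) = vcoset (pimod p Y) y1 \<longrightarrow>
            F (vcoset (pimod p X) x2) = vcoset (pimod p Y) y2 \<longrightarrow>
            F (vcoset (pimod p X) (vadd x1 x2)) = vcoset (pimod p Y) (vadd y1 y2))
      \<and> (\<forall>a. \<forall>x\<in>X. \<forall>y\<in>Y.
            F (vcoset (pimod p X) x) = vcoset (pimod p Y) y \<longrightarrow>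
            F (vcoset (pimod p X) (vsmult a x)) = vcoset (pimod p Y) (vsmult a y))
      \<and> (\<forall>j\<in>{1..n}. F ` Mquot p r c X j = Mquot p r c Y j))"

end

theory Submission
  imports Defs "HOL-Library.Function_Algebras" "HOL-Library.Set_Algebras" "HOL-Library.FuncSet"
begin

(* Write X = X1, Y = X + \<pi>M1 and N = Mn.  As \<pi>M1 \<subseteq> N \<subseteq> Mj for every j \<le> n, we have
   Y \<subseteq> X + N and \<pi>Y \<subseteq> N.  The quotients X/\<pi>X and Y/\<pi>Y are k-vector spaces of the same
   dimension: [Y : \<pi>X] = [Y : X][X : \<pi>X] = [Y : \<pi>Y][\<pi>Y : \<pi>X], and [\<pi>Y : \<pi>X] = [Y : X]
   because multiplication by \<pi> is injective.  Since Y = X + (Y \<inter> N), a basis of X modulo X \<inter> N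
   is also a basis of Y modulo Y \<inter> N, so (X \<inter> N)/\<pi>X and (Y \<inter> N)/\<pi>Y have the same dimension
   as well.  Completing this common basis by bases of the two bottom parts gives bases of X/\<pi>X
   and Y/\<pi>Y whose corresponding vectors differ by elements of N.  The linear isomorphism they
   define moves every class by an element of N \<subseteq> Mj, hence respects the filtrations. *)

section \<open>Cosets of additive subgroups\<close>

definition add_subgroup :: "'v::ab_group_add set \<Rightarrow> bool" where
  "add_subgroup A \<longleftrightarrow> 0 \<in> A \<and> (\<forall>x\<in>A. \<forall>y\<in>A. x + y \<in> A) \<and> (\<forall>x\<in>A. - x \<in> A)"

abbreviation cosets :: "'v::plus set \<Rightarrow> 'v set \<Rightarrow> 'v set set" where
  "cosets T S \<equiv> (\<lambda>v. v +o S) ` T"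

lemma add_subgroup_diff: "add_subgroup A \<Longrightarrow> x \<in> A \<Longrightarrow> y \<in> A \<Longrightarrow> x - y \<in> A"
  unfolding add_subgroup_def by (metis diff_conv_add_uminus)

lemma coset_eq_iff:
  assumes "add_subgroup A"
  shows "u +o A = v +o A \<longleftrightarrow> u - v \<in> A"
proof
  assume "u +o A = v +o A"
  moreover have "u \<in> u +o A"
    using assms set_plus_intro2[of 0 A u] unfolding add_subgroup_def by simp
  ultimately show "u - v \<in> A" by (simp add: set_minus_plus)
next
  assume uv: "u - v \<in> A"
  have "x - u \<in> A \<longleftrightarrow> x - v \<in> A" for x
  proof -
    have "x - v = (x - u) + (u - v)" "x - u = (x - v) - (u - v)" by simp_all
    then show ?thesis
      using assms uv add_subgroup_diff[OF assms] unfolding add_subgroup_def by metis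
  qed
  then show "u +o A = v +o A" by (auto simp: set_minus_plus[symmetric])
qed

lemma card_image_eq_if_same_fibres:
  assumes "\<And>a b. a \<in> D \<Longrightarrow> b \<in> D \<Longrightarrow> f a = f b \<longleftrightarrow> g a = g b"
  shows "card (f ` D) = card (g ` D)" and "finite (f ` D) \<longleftrightarrow> finite (g ` D)"
proof -
  let ?P = "(\<lambda>a. (f a, g a)) ` D"
  have "inj_on fst ?P" "inj_on snd ?P"
    using assms by (auto intro!: inj_onI)
  then have "card (fst ` ?P) = card (snd ` ?P)" "finite (fst ` ?P) \<longleftrightarrow> finite (snd ` ?P)"
    by (simp_all add: card_image finite_image_iff)
  moreover have "fst ` ?P = f ` D" "snd ` ?P = g ` D"
    by (auto simp: image_image)
  ultimately show "card (f ` D) = card (g ` D)" and "finite (f ` D) \<longleftrightarrow> finite (g ` D)"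
    by simp_all
qed

lemma bij_betw_range_if_same_fibres:
  assumes "\<And>a. F (f a) = g a" and "\<And>a b. f a = f b \<longleftrightarrow> g a = g b"
  shows "bij_betw F (range f) (range g)"
  unfolding bij_betw_def inj_on_def using assms by (auto simp: image_image)

lemma set_plus_subgroup_absorb:
  assumes "add_subgroup B" "A \<subseteq> B" "0 \<in> A"
  shows "A + B = B"
proof
  show "A + B \<subseteq> B"
    using assms by (auto simp: add_subgroup_def elim!: set_plus_elim)
  show "B \<subseteq> A + B" using set_zero_plus2[OF assms(3)] .
qed

(* Each coset \<alpha> of A in C lies in the single coset \<alpha> + B of B, and the cosets of A lying in
   v +o B are the translates by v of the cosets of A in B. *)
context
  fixes A B C :: "'v::ab_group_add set"
  assumes A: "add_subgroup A" and B: "add_subgroup B" and C: "add_subgroup C"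
    and AB: "A \<subseteq> B" and BC: "B \<subseteq> C"
begin

private lemma coset_set_plus: "(v +o A) + B = v +o B"
  using set_plus_subgroup_absorb[OF B AB] A by (simp add: set_plus_rearrange3 add_subgroup_def)

private lemma fibre_eq:
  assumes v: "v \<in> C"
  shows "{\<alpha> \<in> cosets C A. \<alpha> + B = v +o B} = (\<lambda>\<alpha>. v +o \<alpha>) ` cosets B A"
proof (intro equalityI subsetI)
  fix \<alpha> assume "\<alpha> \<in> {\<alpha> \<in> cosets C A. \<alpha> + B = v +o B}"
  then obtain w where w: "w \<in> C" "\<alpha> = w +o A" "w +o B = v +o B"
    by (auto simp: coset_set_plus)
  then have "w - v \<in> B" using coset_eq_iff[OF B] by simp
  moreover have "\<alpha> = v +o ((w - v) +o A)" using w(2) by (simp add: set_plus_rearrange2)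
  ultimately show "\<alpha> \<in> (\<lambda>\<alpha>. v +o \<alpha>) ` cosets B A" by blast
next
  fix \<alpha> assume "\<alpha> \<in> (\<lambda>\<alpha>. v +o \<alpha>) ` cosets B A"
  then obtain b where b: "b \<in> B" "\<alpha> = (v + b) +o A" by (auto simp: set_plus_rearrange2)
  have "v + b \<in> C" using C v b BC unfolding add_subgroup_def by blast
  moreover have "(v + b) +o B = v +o B" using coset_eq_iff[OF B] b by simp
  ultimately show "\<alpha> \<in> {\<alpha> \<in> cosets C A. \<alpha> + B = v +o B}"
    using b by (simp add: coset_set_plus)
qed

private lemma card_fibre:
  assumes "v \<in> C"
  shows "card {\<alpha> \<in> cosets C A. \<alpha> + B = v +o B} = card (cosets B A)"
    and "finite {\<alpha> \<in> cosets C A. \<alpha> + B = v +o B} \<longleftrightarrow> finite (cosets B A)"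
proof -
  have "inj (\<lambda>\<alpha>. v +o \<alpha>)"
    by (rule inj_on_inverseI[of _ "\<lambda>\<alpha>. (- v) +o \<alpha>"]) (simp add: set_plus_rearrange2)
  then show "card {\<alpha> \<in> cosets C A. \<alpha> + B = v +o B} = card (cosets B A)"
    and "finite {\<alpha> \<in> cosets C A. \<alpha> + B = v +o B} \<longleftrightarrow> finite (cosets B A)"
    unfolding fibre_eq[OF assms] by (simp_all add: card_image finite_image_iff inj_on_subset)
qed

private lemma cosets_decompose:
  "cosets C A = (\<Union>\<beta> \<in> cosets C B. {\<alpha> \<in> cosets C A. \<alpha> + B = \<beta>})"
  by (auto simp: coset_set_plus)

lemma finite_index_tower_iff:
  "finite (cosets C A) \<longleftrightarrow> finite (cosets C B) \<and> finite (cosets B A)"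
proof
  assume fin: "finite (cosets C A)"
  have "cosets C B = (\<lambda>\<alpha>. \<alpha> + B) ` cosets C A"
    by (simp add: image_image coset_set_plus)
  moreover have "cosets B A \<subseteq> cosets C A" using BC by blast
  ultimately show "finite (cosets C B) \<and> finite (cosets B A)"
    using fin finite_subset by auto
next
  assume "finite (cosets C B) \<and> finite (cosets B A)"
  then show "finite (cosets C A)"
    by (subst cosets_decompose, intro finite_UN_I) (auto simp: card_fibre(2))
qed

lemma card_index_tower:
  "card (cosets C A) = card (cosets C B) * card (cosets B A)"
proof (cases "finite (cosets C A)")
  case True
  then have fin: "finite (cosets C B)" "finite (cosets B A)"
    using finite_index_tower_iff by auto
  have "card (cosets C A) = (\<Sum>\<beta> \<in> cosets C B. card {\<alpha> \<in> cosets C A. \<alpha> + B = \<beta>})"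
    by (subst cosets_decompose, rule card_UN_disjoint) (auto simp: fin card_fibre(2))
  also have "\<dots> = (\<Sum>\<beta> \<in> cosets C B. card (cosets B A))"
    by (rule sum.cong) (auto simp: card_fibre(1))
  finally show ?thesis by simp
next
  case False
  then show ?thesis using finite_index_tower_iff by auto
qed

end

section \<open>Row vectors, submodules and linear combinations\<close>

lemma vadd_eq_plus: "vadd = (+)"
  by (simp add: vadd_def fun_eq_iff)

lemma vcoset_eq_elt_set_plus: "vcoset P v = v +o P"
  by (auto simp: vcoset_def vadd_eq_plus elt_set_plus_def)

lemma vsmult_add_right: "vsmult a (x + y) = vsmult a x + vsmult a y"
  by (simp add: vsmult_def fun_eq_iff distrib_left)

lemma vsmult_add_left: "vsmult (a + b) x = vsmult a x + vsmult b x"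
  by (simp add: vsmult_def fun_eq_iff distrib_right)

lemma vsmult_diff_right: "vsmult a (x - y) = vsmult a x - vsmult a y"
  by (simp add: vsmult_def fun_eq_iff right_diff_distrib)

lemma vsmult_diff_left: "vsmult (a - b) x = vsmult a x - vsmult b x"
  by (simp add: vsmult_def fun_eq_iff left_diff_distrib)

lemma vsmult_vsmult: "vsmult a (vsmult b x) = vsmult (a * b) x"
  by (simp add: vsmult_def fun_eq_iff mult.assoc)

lemma vsmult_zero_right [simp]: "vsmult a 0 = 0"
  and vsmult_zero_left [simp]: "vsmult 0 x = 0"
  and vsmult_one [simp]: "vsmult 1 x = x"
  and vsmult_minus_left: "vsmult (- a) x = - vsmult a x"
  by (simp_all add: vsmult_def fun_eq_iff)

definition submodule :: "(nat \<Rightarrow> 'a::ring_1) set \<Rightarrow> bool" where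
  "submodule A \<longleftrightarrow> 0 \<in> A \<and> (\<forall>x\<in>A. \<forall>y\<in>A. x + y \<in> A) \<and> (\<forall>a. \<forall>x\<in>A. vsmult a x \<in> A)"

lemma left_submodule_iff: "left_submodule r X \<longleftrightarrow> X \<subseteq> vecs r \<and> submodule X"
  by (simp add: left_submodule_def submodule_def vadd_eq_plus zero_fun_def)

lemma submodule_zero: "submodule A \<Longrightarrow> 0 \<in> A"
  and submodule_add: "submodule A \<Longrightarrow> x \<in> A \<Longrightarrow> y \<in> A \<Longrightarrow> x + y \<in> A"
  and submodule_smult: "submodule A \<Longrightarrow> x \<in> A \<Longrightarrow> vsmult a x \<in> A"
  unfolding submodule_def by blast+

lemma submodule_add_subgroup:
  assumes "submodule A"
  shows "add_subgroup A"
  unfolding add_subgroup_def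
  using submodule_zero[OF assms] submodule_add[OF assms] submodule_smult[OF assms, of _ "- 1"]
  by (simp add: vsmult_minus_left)

lemma submodule_diff: "submodule A \<Longrightarrow> x \<in> A \<Longrightarrow> y \<in> A \<Longrightarrow> x - y \<in> A"
  using submodule_add_subgroup add_subgroup_diff by blast

lemma submodule_Int: "submodule A \<Longrightarrow> submodule B \<Longrightarrow> submodule (A \<inter> B)"
  unfolding submodule_def by blast

lemma submodule_set_plus:
  assumes A: "submodule A" and B: "submodule B"
  shows "submodule (A + B)"
  unfolding submodule_def
proof (intro conjI ballI allI)
  show "0 \<in> A + B"
    using set_plus_intro[OF submodule_zero[OF A] submodule_zero[OF B]] by simp
  show "x + y \<in> A + B" if xA: "x \<in> A + B" and yA: "y \<in> A + B" for x y
  proof -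
    obtain a b where "a \<in> A" "b \<in> B" "x = a + b"
      using xA unfolding set_plus_def by blast
    moreover obtain a' b' where "a' \<in> A" "b' \<in> B" "y = a' + b'"
      using yA unfolding set_plus_def by blast
    ultimately show ?thesis
      using set_plus_intro[OF submodule_add[OF A] submodule_add[OF B]] by (simp add: add_ac)
  qed
  show "vsmult c x \<in> A + B" if xA: "x \<in> A + B" for c x
  proof -
    obtain a b where "a \<in> A" "b \<in> B" "x = a + b"
      using xA unfolding set_plus_def by blast
    then show ?thesis
      using set_plus_intro[OF submodule_smult[OF A] submodule_smult[OF B]] by (simp add: vsmult_add_right)
  qed
qed

lemma subset_set_plus_submodule: "submodule B \<Longrightarrow> A \<subseteq> A + B"
  using set_plus_intro[of _ A 0 B] submodule_zero by fastforce

lemma set_plus_subset_submodule: "submodule C \<Longrightarrow> A \<subseteq> C \<Longrightarrow> B \<subseteq> C \<Longrightarrow> A + B \<subseteq> C"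
  using submodule_add by (fastforce simp: set_plus_def)

lemma submodule_cyclic: "submodule (range (\<lambda>a. vsmult a t))"
  unfolding submodule_def
  by (auto simp: vsmult_add_left[symmetric] vsmult_vsmult intro: range_eqI[of _ _ 0])

lemma submodule_sum: "submodule A \<Longrightarrow> (\<And>i. i \<in> I \<Longrightarrow> f i \<in> A) \<Longrightarrow> sum f I \<in> A"
  by (induction I rule: infinite_finite_induct) (auto intro: submodule_zero submodule_add)

lemma coset_smult_cong:
  assumes S: "submodule S" and u: "u +o S = u' +o S"
  shows "vsmult a u +o S = vsmult a u' +o S"
proof -
  have "vsmult a (u - u') \<in> S"
    using u submodule_smult[OF S] coset_eq_iff[OF submodule_add_subgroup[OF S]] by blast
  then show ?thesis
    by (simp add: coset_eq_iff[OF submodule_add_subgroup[OF S]] vsmult_diff_right)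
qed

lemma coset_add_cong:
  assumes "add_subgroup S" "u +o S = u' +o S" "v +o S = v' +o S"
  shows "(u + v) +o S = (u' + v') +o S"
proof -
  have "(u - u') + (v - v') \<in> S"
    using assms coset_eq_iff[OF assms(1)] unfolding add_subgroup_def by blast
  moreover have "(u + v) - (u' + v') = (u - u') + (v - v')" by simp
  ultimately show ?thesis by (simp only: coset_eq_iff[OF assms(1)])
qed

definition lincomb :: "nat \<Rightarrow> (nat \<Rightarrow> 'a::ring_1) \<Rightarrow> (nat \<Rightarrow> nat \<Rightarrow> 'a) \<Rightarrow> nat \<Rightarrow> 'a" where
  "lincomb d a bs = (\<Sum>i<d. vsmult (a i) (bs i))"

lemma lincomb_mem: "submodule A \<Longrightarrow> (\<And>i. i < d \<Longrightarrow> bs i \<in> A) \<Longrightarrow> lincomb d a bs \<in> A"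
  unfolding lincomb_def by (auto intro: submodule_sum submodule_smult)

lemma lincomb_cong: "(\<And>i. i < d \<Longrightarrow> a i = a' i) \<Longrightarrow> (\<And>i. i < d \<Longrightarrow> bs i = bs' i)
    \<Longrightarrow> lincomb d a bs = lincomb d a' bs'"
  unfolding lincomb_def by (rule sum.cong) auto

lemma lincomb_add: "lincomb d a bs + lincomb d a' bs = lincomb d (\<lambda>i. a i + a' i) bs"
  unfolding lincomb_def by (simp add: sum.distrib vsmult_add_left)

lemma lincomb_diff: "lincomb d a bs - lincomb d a' bs = lincomb d (\<lambda>i. a i - a' i) bs"
  unfolding lincomb_def by (simp add: sum_subtractf vsmult_diff_left)

lemma lincomb_diff_vectors: "lincomb d a bs' - lincomb d a bs = lincomb d a (\<lambda>i. bs' i - bs i)"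
  unfolding lincomb_def by (simp add: sum_subtractf vsmult_diff_right)

lemma lincomb_Suc: "lincomb (Suc d) a bs = lincomb d a bs + vsmult (a d) (bs d)"
  unfolding lincomb_def by simp

lemma lincomb_smult: "vsmult c (lincomb d a bs) = lincomb d (\<lambda>i. c * a i) bs"
proof (induction d)
  case 0
  show ?case by (simp add: lincomb_def vsmult_def fun_eq_iff)
next
  case (Suc d)
  have "vsmult c (lincomb (Suc d) a bs) = vsmult c (lincomb d a bs) + vsmult c (vsmult (a d) (bs d))"
    by (simp only: lincomb_Suc vsmult_add_right)
  also have "\<dots> = lincomb (Suc d) (\<lambda>i. c * a i) bs"
    by (simp only: Suc vsmult_vsmult lincomb_Suc)
  finally show ?case .
qed

definition concat_at :: "nat \<Rightarrow> (nat \<Rightarrow> 'b) \<Rightarrow> (nat \<Rightarrow> 'b) \<Rightarrow> nat \<Rightarrow> 'b" where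
  "concat_at m bs ds i = (if i < m then bs i else ds (i - m))"

lemma lincomb_concat_at:
  "lincomb (m + e) a (concat_at m bs ds) = lincomb m a bs + lincomb e (\<lambda>j. a (m + j)) ds"
proof (induction e)
  case 0
  show ?case by (simp add: lincomb_def concat_at_def)
next
  case (Suc e)
  then show ?case by (simp add: lincomb_Suc concat_at_def add.assoc)
qed

lemma submodule_vecs: "submodule (vecs r)"
  by (simp add: submodule_def vecs_def vsmult_def)

lemma Mlat_subset_vecs: "Mlat p r c j \<subseteq> vecs r"
  unfolding Mlat_def by blast

lemma Mlat_antimono: "j \<le> k \<Longrightarrow> Mlat p r c k \<subseteq> Mlat p r c j"
  unfolding Mlat_def by auto

lemma Mquot_eq_cosets: "Mquot p r c X j = cosets (X \<inter> Mlat p r c j) (pimod p X)"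
  unfolding Mquot_def by (rule image_cong) (simp_all add: vcoset_eq_elt_set_plus)

(* A k-linear bijection T/S \<rightarrow> T'/S', stated on representatives as in filtered_iso. *)
definition quotient_iso :: "(nat \<Rightarrow> 'a::ring_1) set \<Rightarrow> (nat \<Rightarrow> 'a) set \<Rightarrow> (nat \<Rightarrow> 'a) set
    \<Rightarrow> (nat \<Rightarrow> 'a) set \<Rightarrow> ((nat \<Rightarrow> 'a) set \<Rightarrow> (nat \<Rightarrow> 'a) set) \<Rightarrow> bool" where
  "quotient_iso T S T' S' F \<longleftrightarrow> bij_betw F (cosets T S) (cosets T' S')
     \<and> (\<forall>x1\<in>T. \<forall>x2\<in>T. \<forall>y1\<in>T'. \<forall>y2\<in>T'. F (x1 +o S) = y1 +o S' \<longrightarrow> F (x2 +o S) = y2 +o S'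
          \<longrightarrow> F ((x1 + x2) +o S) = (y1 + y2) +o S')
     \<and> (\<forall>a. \<forall>x\<in>T. \<forall>y\<in>T'. F (x +o S) = y +o S' \<longrightarrow> F (vsmult a x +o S) = vsmult a y +o S')"

lemma filtered_isoI:
  assumes iso: "quotient_iso X (pimod p X) Y (pimod p Y) F"
    and X: "X \<subseteq> Mlat p r c 1" and Y: "Y \<subseteq> Mlat p r c 1"
    and filt: "\<And>j. j \<in> {1..n} \<Longrightarrow>
      F ` cosets (X \<inter> Mlat p r c j) (pimod p X) = cosets (Y \<inter> Mlat p r c j) (pimod p Y)"
  shows "filtered_iso p r c n X Y"
proof -
  have M1: "X \<inter> Mlat p r c 1 = X" "Y \<inter> Mlat p r c 1 = Y" using X Y by blast+
  show ?thesis
    unfolding filtered_iso_def Mquot_eq_cosets vcoset_eq_elt_set_plus vadd_eq_plus M1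
    using iso filt unfolding quotient_iso_def by (intro exI[of _ F]) simp
qed

(* Sends the class of lincomb d a bs to the class of lincomb d a bs'; SOME picks coordinates
   of the class, which are unique modulo \<pi> when bs and bs' are k-bases (basis_iso_lincomb). *)
definition basis_iso :: "(nat \<Rightarrow> 'a::ring_1) set \<Rightarrow> (nat \<Rightarrow> 'a) set \<Rightarrow> nat \<Rightarrow> (nat \<Rightarrow> nat \<Rightarrow> 'a)
    \<Rightarrow> (nat \<Rightarrow> nat \<Rightarrow> 'a) \<Rightarrow> (nat \<Rightarrow> 'a) set \<Rightarrow> (nat \<Rightarrow> 'a) set" where
  "basis_iso S S' d bs bs' C = lincomb d (SOME a. C = lincomb d a bs +o S) bs' +o S'"

section \<open>Quotients by \<pi> as vector spaces over the residue field\<close>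

(* The consequences of nc_dvr that are used. *)
locale finite_residue_dvr =
  fixes p :: "'a::ring_1_no_zero_divisors"
  assumes nonzero: "p \<noteq> 0"
    and normal: "\<exists>a'. a * p = p * a'"
    and one_notin_pideal: "1 \<notin> pideal p"
    and left_inverse_mod_pideal: "x \<notin> pideal p \<Longrightarrow> \<exists>y. y * x - 1 \<in> pideal p"
    and finite_residue_classes: "finite (residue_classes p)"

lemma nc_dvr_imp_finite_residue_dvr:
  assumes dvr: "nc_dvr p" and fin: "finite (residue_classes p)"
  shows "finite_residue_dvr p"
proof
  show "p \<noteq> 0" using dvr unfolding nc_dvr_def by blast
  show "\<exists>a'. a * p = p * a'" for a
  proof -
    have "a * p \<in> range (\<lambda>x. p * x)"
      using dvr unfolding nc_dvr_def by (metis rangeI)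
    then show ?thesis by blast
  qed
  show "1 \<notin> pideal p" "x \<notin> pideal p \<Longrightarrow> \<exists>y. y * x - 1 \<in> pideal p" for x
    using dvr unfolding nc_dvr_def quotient_division_ring_def by blast+
qed (rule fin)

context finite_residue_dvr
begin

lemma mem_pideal_iff: "x \<in> pideal p \<longleftrightarrow> (\<exists>u. x = p * u)"
  unfolding pideal_def by auto

lemma pideal_mult_left:
  assumes "x \<in> pideal p"
  shows "a * x \<in> pideal p"
proof -
  obtain u where "x = p * u" using assms mem_pideal_iff by blast
  moreover obtain a' where "a * p = p * a'" using normal by blast
  ultimately have "a * x = p * (a' * u)" by (metis mult.assoc)
  then show ?thesis using mem_pideal_iff by blast
qed

lemma add_subgroup_pideal: "add_subgroup (pideal p)"
  unfolding add_subgroup_def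
proof (intro conjI ballI)
  show "0 \<in> pideal p" unfolding mem_pideal_iff by (intro exI[of _ 0]) simp
  fix x y assume "x \<in> pideal p" "y \<in> pideal p"
  then obtain u v where "x = p * u" "y = p * v" using mem_pideal_iff by blast
  then have "x + y = p * (u + v)" "- x = p * (- u)" by (simp_all add: distrib_left)
  then show "x + y \<in> pideal p" "- x \<in> pideal p" using mem_pideal_iff by blast+
qed

definition q :: nat where
  "q = card (residue_classes p)"

lemma residue_classes_eq_cosets: "residue_classes p = cosets UNIV (pideal p)"
  by (auto simp: residue_classes_def elt_set_plus_def image_def)

lemma two_le_q: "2 \<le> q"
proof -
  have "0 +o pideal p \<noteq> 1 +o pideal p"
  proof
    assume "0 +o pideal p = 1 +o pideal p"
    then have "0 - 1 \<in> pideal p" by (rule coset_eq_iff[OF add_subgroup_pideal, THEN iffD1])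
    then have "- (0 - 1) \<in> pideal p" using add_subgroup_pideal unfolding add_subgroup_def by blast
    then show False using one_notin_pideal by simp
  qed
  then have "2 = card {0 +o pideal p, 1 +o pideal p}" by simp
  also have "\<dots> \<le> q"
    unfolding q_def residue_classes_eq_cosets
    by (rule card_mono) (use finite_residue_classes residue_classes_eq_cosets in \<open>auto intro: image_eqI[of _ _ 0]\<close>)
  finally show ?thesis .
qed

lemma vsmult_p_cancel: "vsmult p u = vsmult p v \<longleftrightarrow> u = v"
  using nonzero by (simp add: vsmult_def fun_eq_iff)

lemma vsmult_pideal_mem_pimod:
  assumes "submodule T" "t \<in> T" "a \<in> pideal p"
  shows "vsmult a t \<in> pimod p T"
proof -
  obtain u where "a = p * u" using assms(3) mem_pideal_iff by blast
  then have "vsmult a t = vsmult p (vsmult u t)" by (simp add: vsmult_vsmult)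
  then show ?thesis using assms(1,2) submodule_smult unfolding pimod_def by blast
qed

lemma submodule_pimod:
  assumes X: "submodule X"
  shows "submodule (pimod p X)"
  unfolding submodule_def
proof (intro conjI ballI allI)
  show "0 \<in> pimod p X"
    using submodule_zero[OF X] unfolding pimod_def by (auto intro: image_eqI[of _ _ 0])
  show "x + y \<in> pimod p X" if "x \<in> pimod p X" "y \<in> pimod p X" for x y
    using that submodule_add[OF X] unfolding pimod_def by (auto simp: vsmult_add_right[symmetric])
  show "vsmult a x \<in> pimod p X" if x: "x \<in> pimod p X" for a x
  proof -
    obtain a' where "a * p = p * a'" using normal by blast
    then have "a * p \<in> pideal p" using mem_pideal_iff by blast
    moreover obtain u where "u \<in> X" "x = vsmult p u" using x unfolding pimod_def by blast
    ultimately show ?thesis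
      using vsmult_pideal_mem_pimod[OF X] by (simp add: vsmult_vsmult)
  qed
qed

lemma pimod_subset: "submodule X \<Longrightarrow> pimod p X \<subseteq> X"
  unfolding pimod_def using submodule_smult by blast

lemma pimod_mono: "X \<subseteq> Y \<Longrightarrow> pimod p X \<subseteq> pimod p Y"
  unfolding pimod_def by blast

lemma lincomb_pideal_mem_pimod:
  assumes "submodule T" "\<And>i. i < d \<Longrightarrow> bs i \<in> T" "\<And>i. i < d \<Longrightarrow> a i \<in> pideal p"
  shows "lincomb d a bs \<in> pimod p T"
  unfolding lincomb_def
  using assms by (auto intro!: submodule_sum submodule_pimod vsmult_pideal_mem_pimod)

lemma card_cosets_pimod:
  assumes X: "submodule X"
  shows "card (cosets (pimod p Y) (pimod p X)) = card (cosets Y X)"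
    and "finite (cosets (pimod p Y) (pimod p X)) \<longleftrightarrow> finite (cosets Y X)"
proof -
  have "vsmult p a +o pimod p X = vsmult p b +o pimod p X \<longleftrightarrow> a +o X = b +o X" for a b
  proof -
    have "vsmult p (a - b) \<in> pimod p X \<longleftrightarrow> a - b \<in> X"
      unfolding pimod_def by (auto simp: vsmult_p_cancel)
    then show ?thesis
      using X submodule_pimod
      by (simp add: coset_eq_iff submodule_add_subgroup vsmult_diff_right)
  qed
  moreover have "cosets (pimod p Y) (pimod p X) = (\<lambda>y. vsmult p y +o pimod p X) ` Y"
    unfolding pimod_def by (simp add: image_image)
  ultimately show "card (cosets (pimod p Y) (pimod p X)) = card (cosets Y X)"
    and "finite (cosets (pimod p Y) (pimod p X)) \<longleftrightarrow> finite (cosets Y X)"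
    using card_image_eq_if_same_fibres[of Y "\<lambda>y. vsmult p y +o pimod p X" "\<lambda>y. y +o X"]
    by simp_all
qed

(* T/S is then a vector space over k = \<Delta>/(\<pi>). *)
definition kspace :: "(nat \<Rightarrow> 'a) set \<Rightarrow> (nat \<Rightarrow> 'a) set \<Rightarrow> bool" where
  "kspace T S \<longleftrightarrow> submodule T \<and> submodule S \<and> S \<subseteq> T \<and> pimod p T \<subseteq> S"

lemma kspace_pimod: "submodule T \<Longrightarrow> kspace T (pimod p T)"
  by (simp add: kspace_def submodule_pimod pimod_subset)

lemma kspace_Int:
  assumes "submodule T" "submodule N" "pimod p T \<subseteq> N"
  shows "kspace T (T \<inter> N)" and "kspace (T \<inter> N) (pimod p T)"
  using assms pimod_subset[OF assms(1)] pimod_mono[of "T \<inter> N" T]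
  by (auto simp: kspace_def submodule_Int submodule_pimod)

lemma kspace_line:
  assumes ks: "kspace T S" and t: "t \<in> T"
  shows "kspace T (S + range (\<lambda>a. vsmult a t))" and "S \<subseteq> S + range (\<lambda>a. vsmult a t)"
proof -
  from ks have T: "submodule T" and S: "submodule S" and "S \<subseteq> T" "pimod p T \<subseteq> S"
    by (auto simp: kspace_def)
  show SS': "S \<subseteq> S + range (\<lambda>a. vsmult a t)"
    by (rule subset_set_plus_submodule[OF submodule_cyclic])
  have "S + range (\<lambda>a. vsmult a t) \<subseteq> T"
    using submodule_smult[OF T t] by (intro set_plus_subset_submodule[OF T \<open>S \<subseteq> T\<close>]) blast
  then show "kspace T (S + range (\<lambda>a. vsmult a t))"
    using S SS' \<open>pimod p T \<subseteq> S\<close> by (auto simp: kspace_def T submodule_set_plus submodule_cyclic)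
qed

lemma pideal_smult_mem: "kspace T S \<Longrightarrow> t \<in> T \<Longrightarrow> a \<in> pideal p \<Longrightarrow> vsmult a t \<in> S"
  unfolding kspace_def using vsmult_pideal_mem_pimod by blast

lemma smult_mem_imp_pideal:
  assumes ks: "kspace T S" and t: "t \<in> T" "t \<notin> S" and at: "vsmult a t \<in> S"
  shows "a \<in> pideal p"
proof (rule ccontr)
  assume "a \<notin> pideal p"
  then obtain y where y: "y * a - 1 \<in> pideal p" using left_inverse_mod_pideal by blast
  have S: "submodule S" using ks kspace_def by blast
  have "vsmult y (vsmult a t) \<in> S" using submodule_smult[OF S at] .
  moreover have "vsmult (y * a - 1) t \<in> S" using pideal_smult_mem[OF ks t(1) y] .
  ultimately have "vsmult y (vsmult a t) - vsmult (y * a - 1) t \<in> S" by (rule submodule_diff[OF S])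
  then show False using t(2) by (simp add: vsmult_vsmult vsmult_diff_left)
qed

definition kbasis :: "(nat \<Rightarrow> 'a) set \<Rightarrow> (nat \<Rightarrow> 'a) set \<Rightarrow> nat \<Rightarrow> (nat \<Rightarrow> nat \<Rightarrow> 'a) \<Rightarrow> bool" where
  "kbasis T S d bs \<longleftrightarrow> (\<forall>i<d. bs i \<in> T) \<and> (\<forall>t\<in>T. \<exists>a. t - lincomb d a bs \<in> S)
     \<and> (\<forall>a. lincomb d a bs \<in> S \<longrightarrow> (\<forall>i<d. a i \<in> pideal p))"

lemma kbasis_mem: "kbasis T S d bs \<Longrightarrow> i < d \<Longrightarrow> bs i \<in> T"
  and kbasis_span: "kbasis T S d bs \<Longrightarrow> t \<in> T \<Longrightarrow> \<exists>a. t - lincomb d a bs \<in> S"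
  and kbasis_indep: "kbasis T S d bs \<Longrightarrow> lincomb d a bs \<in> S \<Longrightarrow> i < d \<Longrightarrow> a i \<in> pideal p"
  unfolding kbasis_def by blast+

lemma kbasis_lincomb_mem: "submodule T \<Longrightarrow> kbasis T S d bs \<Longrightarrow> lincomb d a bs \<in> T"
  by (rule lincomb_mem) (auto dest: kbasis_mem)

lemma kbasis_lincomb_pideal_mem:
  assumes "kspace T S" "kbasis T S d bs" "\<forall>i<d. a i \<in> pideal p"
  shows "lincomb d a bs \<in> S"
  using assms lincomb_pideal_mem_pimod[of T d bs a] by (auto simp: kspace_def dest: kbasis_mem)

lemma kbasis_line:
  assumes ks: "kspace T S" and t: "t \<in> T" "t \<notin> S"
  shows "kbasis (S + range (\<lambda>a. vsmult a t)) S 1 (\<lambda>_. t)"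
  unfolding kbasis_def
proof (intro conjI allI ballI impI)
  have S: "submodule S" using ks kspace_def by blast
  have lincomb_1: "lincomb (Suc 0) a (\<lambda>_. t) = vsmult (a 0) t" for a
    by (simp add: lincomb_def)
  show "t \<in> S + range (\<lambda>a. vsmult a t)"
    using set_plus_intro[OF submodule_zero[OF S] rangeI[of "\<lambda>a. vsmult a t" 1]] by simp
  show "\<exists>a. x - lincomb 1 a (\<lambda>_. t) \<in> S" if x: "x \<in> S + range (\<lambda>a. vsmult a t)" for x
  proof -
    obtain s c where "s \<in> S" "x = s + vsmult c t" using x unfolding set_plus_def by blast
    then have "x - lincomb 1 (\<lambda>_. c) (\<lambda>_. t) \<in> S" by (simp add: lincomb_1)
    then show ?thesis by blast
  qed
  show "a i \<in> pideal p" if "lincomb 1 a (\<lambda>_. t) \<in> S" "i < 1" for a i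
    using that smult_mem_imp_pideal[OF ks t] by (simp add: lincomb_1)
qed

lemma lincomb_coset_eq_iff:
  assumes ks: "kspace T S" and b: "kbasis T S d bs"
  shows "lincomb d a bs +o S = lincomb d a' bs +o S \<longleftrightarrow> (\<forall>i<d. a i - a' i \<in> pideal p)"
proof -
  from ks have T: "submodule T" and S: "submodule S" and PT: "pimod p T \<subseteq> S"
    by (auto simp: kspace_def)
  have "lincomb d a bs +o S = lincomb d a' bs +o S \<longleftrightarrow> lincomb d (\<lambda>i. a i - a' i) bs \<in> S"
    by (simp add: coset_eq_iff submodule_add_subgroup[OF S] lincomb_diff)
  also have "\<dots> \<longleftrightarrow> (\<forall>i<d. a i - a' i \<in> pideal p)"
    using kbasis_indep[OF b, of "\<lambda>i. a i - a' i"] kbasis_lincomb_pideal_mem[OF ks b, of "\<lambda>i. a i - a' i"]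
    by blast
  finally show ?thesis .
qed

lemma cosets_eq_range_lincomb:
  assumes ks: "kspace T S" and b: "kbasis T S d bs"
  shows "cosets T S = range (\<lambda>a. lincomb d a bs +o S)"
proof
  from ks have T: "submodule T" and S: "submodule S" by (auto simp: kspace_def)
  show "cosets T S \<subseteq> range (\<lambda>a. lincomb d a bs +o S)"
    using kbasis_span[OF b] coset_eq_iff[OF submodule_add_subgroup[OF S]] by blast
  show "range (\<lambda>a. lincomb d a bs +o S) \<subseteq> cosets T S"
    using kbasis_lincomb_mem[OF T b] by blast
qed

lemma card_cosets_kbasis:
  assumes ks: "kspace T S" and b: "kbasis T S d bs"
  shows "card (cosets T S) = q ^ d"
proof -
  let ?coords = "\<lambda>a. restrict (\<lambda>i. a i +o pideal p) {..<d}"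
  have "lincomb d a bs +o S = lincomb d a' bs +o S \<longleftrightarrow> ?coords a = ?coords a'" for a a'
  proof -
    have "?coords a = ?coords a' \<longleftrightarrow> (\<forall>i<d. a i +o pideal p = a' i +o pideal p)"
      by (auto simp: fun_eq_iff)
    then show ?thesis
      by (simp add: lincomb_coset_eq_iff[OF ks b] coset_eq_iff[OF add_subgroup_pideal])
  qed
  then have "card (cosets T S) = card (range ?coords)"
    unfolding cosets_eq_range_lincomb[OF ks b] by (rule card_image_eq_if_same_fibres(1))
  also have "range ?coords = (\<Pi>\<^sub>E i\<in>{..<d}. residue_classes p)"
  proof
    show "range ?coords \<subseteq> (\<Pi>\<^sub>E i\<in>{..<d}. residue_classes p)"
      by (auto simp: residue_classes_eq_cosets)
    show "(\<Pi>\<^sub>E i\<in>{..<d}. residue_classes p) \<subseteq> range ?coords"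
    proof
      fix h assume h: "h \<in> (\<Pi>\<^sub>E i\<in>{..<d}. residue_classes p)"
      then have "\<forall>i\<in>{..<d}. \<exists>x. h i = x +o pideal p"
        by (auto simp: residue_classes_eq_cosets)
      then obtain a where a: "\<forall>i\<in>{..<d}. h i = a i +o pideal p" by metis
      have "h = restrict h {..<d}" using PiE_restrict[OF h] by simp
      also have "\<dots> = ?coords a" by (rule restrict_ext) (use a in simp)
      finally have "h = ?coords a" .
      then show "h \<in> range ?coords" by blast
    qed
  qed
  also have "card \<dots> = q ^ d"
    by (simp add: card_PiE q_def)
  finally show ?thesis .
qed

lemma kbasis_concat_at:
  assumes ks: "kspace T S" and T': "submodule T'" "S \<subseteq> T'" "T' \<subseteq> T"
    and b1: "kbasis T T' m bs" and b2: "kbasis T' S e ds"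
  shows "kbasis T S (m + e) (concat_at m bs ds)"
  unfolding kbasis_def
proof (intro conjI allI ballI impI)
  from ks have T: "submodule T" and S: "submodule S" and PT: "pimod p T \<subseteq> S"
    by (auto simp: kspace_def)
  show "concat_at m bs ds i \<in> T" if "i < m + e" for i
    using that kbasis_mem[OF b1] kbasis_mem[OF b2] T'(3) by (auto simp: concat_at_def)
  show "\<exists>a. t - lincomb (m + e) a (concat_at m bs ds) \<in> S" if t: "t \<in> T" for t
  proof -
    obtain a where a: "t - lincomb m a bs \<in> T'" using kbasis_span[OF b1 t] by blast
    obtain c where c: "(t - lincomb m a bs) - lincomb e c ds \<in> S" using kbasis_span[OF b2 a] by blast
    have "lincomb m (concat_at m a c) bs = lincomb m a bs"
      and "lincomb e (\<lambda>j. concat_at m a c (m + j)) ds = lincomb e c ds"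
      by (rule lincomb_cong; simp add: concat_at_def)+
    then have "lincomb (m + e) (concat_at m a c) (concat_at m bs ds) = lincomb m a bs + lincomb e c ds"
      by (simp add: lincomb_concat_at)
    then show ?thesis using c by (intro exI[of _ "concat_at m a c"]) (simp add: diff_diff_eq)
  qed
  show "a i \<in> pideal p" if h: "lincomb (m + e) a (concat_at m bs ds) \<in> S" "i < m + e" for a i
  proof -
    define u where "u = lincomb m a bs"
    define w where "w = lincomb e (\<lambda>j. a (m + j)) ds"
    have uw: "u + w \<in> S" using h(1) unfolding u_def w_def lincomb_concat_at .
    have w: "w \<in> T'" unfolding w_def using lincomb_mem[OF T'(1) kbasis_mem[OF b2]] .
    have "(u + w) - w \<in> T'" using submodule_diff[OF T'(1) _ w] uw T'(2) by blast
    then have low: "\<forall>i<m. a i \<in> pideal p" using kbasis_indep[OF b1] unfolding u_def by simp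
    then have "u \<in> S" using lincomb_pideal_mem_pimod[of T m bs a] kbasis_mem[OF b1] T PT unfolding u_def by blast
    then have "(u + w) - u \<in> S" using submodule_diff[OF S uw] by blast
    then have high: "\<forall>j<e. a (m + j) \<in> pideal p"
      using kbasis_indep[OF b2, of "\<lambda>j. a (m + j)"] unfolding w_def by simp
    show ?thesis
    proof (cases "i < m")
      case True then show ?thesis using low by blast
    next
      case False then show ?thesis using high[rule_format, of "i - m"] h(2) by simp
    qed
  qed
qed

lemma card_cosets_add_line:
  assumes ks: "kspace T S" and t: "t \<in> T" "t \<notin> S"
  shows "card (cosets T S) = card (cosets T (S + range (\<lambda>a. vsmult a t))) * q"
proof -
  let ?S' = "S + range (\<lambda>a. vsmult a t)"
  have ks': "kspace T ?S'" and SS': "S \<subseteq> ?S'" using kspace_line[OF ks t(1)] by blast+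
  then have "kspace ?S' S" using ks pimod_mono[of ?S' T] by (auto simp: kspace_def)
  moreover have "add_subgroup S" "add_subgroup ?S'" "add_subgroup T" "?S' \<subseteq> T"
    using ks ks' by (auto simp: kspace_def submodule_add_subgroup)
  ultimately show ?thesis
    using card_index_tower[of S ?S' T] SS' card_cosets_kbasis[OF _ kbasis_line[OF ks t]] by simp
qed

lemma kbasis_exists:
  assumes "kspace T S" "finite (cosets T S)"
  shows "\<exists>d bs. kbasis T S d bs"
  using assms
proof (induction "card (cosets T S)" arbitrary: S rule: less_induct)
  case less
  show ?case
  proof (cases "T \<subseteq> S")
    case True
    then have "kbasis T S 0 bs" for bs by (auto simp: kbasis_def lincomb_def)
    then show ?thesis by blast
  next
    case False
    then obtain t where t: "t \<in> T" "t \<notin> S" by blast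
    define S' where "S' = S + range (\<lambda>a. vsmult a t)"
    have ks': "kspace T S'" and SS': "S \<subseteq> S'"
      using kspace_line[OF less.prems(1) t(1)] unfolding S'_def by blast+
    have line: "kbasis S' S 1 (\<lambda>_. t)"
      unfolding S'_def by (rule kbasis_line[OF less.prems(1) t])
    have sub: "add_subgroup S" "add_subgroup S'" "add_subgroup T" "S' \<subseteq> T"
      using less.prems(1) ks' by (auto simp: kspace_def submodule_add_subgroup)
    have tower: "card (cosets T S) = card (cosets T S') * q"
      using card_cosets_add_line[OF less.prems(1) t] unfolding S'_def .
    have "cosets T S \<noteq> {}" using less.prems(1) submodule_zero by (auto simp: kspace_def)
    then have "0 < card (cosets T S)" using less.prems(2) by (simp add: card_gt_0_iff)
    then have "card (cosets T S') * 1 < card (cosets T S') * q"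
      using tower two_le_q by (intro mult_strict_left_mono) auto
    then have "card (cosets T S') < card (cosets T S)" using tower by simp
    moreover have "finite (cosets T S')"
      using finite_index_tower_iff[OF sub(1-3) SS' sub(4)] less.prems(2) by blast
    ultimately obtain d bs where "kbasis T S' d bs" using less.hyps ks' by blast
    then have "kbasis T S (d + 1) (concat_at d bs (\<lambda>_. t))"
      using kbasis_concat_at[OF less.prems(1) _ SS' sub(4) _ line] ks' by (simp add: kspace_def)
    then show ?thesis by blast
  qed
qed

context
  fixes T S T' S' d bs bs'
  assumes ks: "kspace T S" and ks': "kspace T' S'"
    and b: "kbasis T S d bs" and b': "kbasis T' S' d bs'"
begin

lemma basis_iso_lincomb: "basis_iso S S' d bs bs' (lincomb d a bs +o S) = lincomb d a bs' +o S'"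
proof -
  let ?a = "SOME a'. lincomb d a bs +o S = lincomb d a' bs +o S"
  have "lincomb d a bs +o S = lincomb d ?a bs +o S" by (rule someI[of _ a]) (rule refl)
  from sym[OF this] have "\<forall>i<d. ?a i - a i \<in> pideal p"
    by (rule lincomb_coset_eq_iff[OF ks b, THEN iffD1])
  then have "lincomb d ?a bs' +o S' = lincomb d a bs' +o S'"
    by (rule lincomb_coset_eq_iff[OF ks' b', THEN iffD2])
  then show ?thesis unfolding basis_iso_def .
qed

lemma coset_eq_lincomb: "x \<in> T \<Longrightarrow> \<exists>a. x +o S = lincomb d a bs +o S"
  using cosets_eq_range_lincomb[OF ks b] by blast

lemma bij_betw_basis_iso: "bij_betw (basis_iso S S' d bs bs') (cosets T S) (cosets T' S')"
  unfolding cosets_eq_range_lincomb[OF ks b] cosets_eq_range_lincomb[OF ks' b']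
  by (rule bij_betw_range_if_same_fibres[where f = "\<lambda>a. lincomb d a bs +o S"
        and g = "\<lambda>a. lincomb d a bs' +o S'"])
    (fact basis_iso_lincomb, simp only: lincomb_coset_eq_iff[OF ks b] lincomb_coset_eq_iff[OF ks' b'])

lemma basis_iso_add:
  assumes x: "x1 \<in> T" "x2 \<in> T"
    and y: "basis_iso S S' d bs bs' (x1 +o S) = y1 +o S'" "basis_iso S S' d bs bs' (x2 +o S) = y2 +o S'"
  shows "basis_iso S S' d bs bs' ((x1 + x2) +o S) = (y1 + y2) +o S'"
proof -
  have S: "add_subgroup S" and S': "add_subgroup S'"
    using ks ks' by (auto simp: kspace_def submodule_add_subgroup)
  obtain a1 a2 where a: "x1 +o S = lincomb d a1 bs +o S" "x2 +o S = lincomb d a2 bs +o S"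
    using coset_eq_lincomb[OF x(1)] coset_eq_lincomb[OF x(2)] by blast
  have "lincomb d a1 bs' +o S' = y1 +o S'" "lincomb d a2 bs' +o S' = y2 +o S'"
    using y a by (simp_all add: basis_iso_lincomb)
  have "(x1 + x2) +o S = (lincomb d a1 bs + lincomb d a2 bs) +o S"
    by (rule coset_add_cong[OF S a])
  then have "basis_iso S S' d bs bs' ((x1 + x2) +o S) = (lincomb d a1 bs' + lincomb d a2 bs') +o S'"
    by (simp only: lincomb_add basis_iso_lincomb)
  also have "\<dots> = (y1 + y2) +o S'"
    by (rule coset_add_cong[OF S']) fact+
  finally show ?thesis .
qed

lemma basis_iso_smult:
  assumes x: "x \<in> T" and y: "basis_iso S S' d bs bs' (x +o S) = y +o S'"
  shows "basis_iso S S' d bs bs' (vsmult c x +o S) = vsmult c y +o S'"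
proof -
  have S: "submodule S" and S': "submodule S'" using ks ks' by (auto simp: kspace_def)
  obtain a where a: "x +o S = lincomb d a bs +o S" using coset_eq_lincomb[OF x] by blast
  have "lincomb d a bs' +o S' = y +o S'"
    using y a by (simp add: basis_iso_lincomb)
  have "vsmult c x +o S = vsmult c (lincomb d a bs) +o S"
    by (rule coset_smult_cong[OF S a])
  then have "basis_iso S S' d bs bs' (vsmult c x +o S) = vsmult c (lincomb d a bs') +o S'"
    by (simp only: lincomb_smult basis_iso_lincomb)
  also have "\<dots> = vsmult c y +o S'"
    by (rule coset_smult_cong[OF S']) fact
  finally show ?thesis .
qed

lemma quotient_iso_basis_iso: "quotient_iso T S T' S' (basis_iso S S' d bs bs')"
  unfolding quotient_iso_def
  by (intro conjI ballI allI impI bij_betw_basis_iso basis_iso_add basis_iso_smult)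

end

section \<open>Comparing X with X + \<pi> M_1\<close>

lemma card_cosets_pimod_eq:
  assumes X: "submodule X" and Y: "submodule Y" and XY: "X \<subseteq> Y"
    and fin: "finite (cosets Y (pimod p X))"
  shows "card (cosets X (pimod p X)) = card (cosets Y (pimod p Y))"
proof -
  have sub: "add_subgroup (pimod p X)" "add_subgroup (pimod p Y)" "add_subgroup X" "add_subgroup Y"
    using X Y by (simp_all add: submodule_pimod submodule_add_subgroup)
  have incl: "pimod p X \<subseteq> X" "pimod p Y \<subseteq> Y" "pimod p X \<subseteq> pimod p Y"
    using X Y XY by (simp_all add: pimod_subset pimod_mono)
  have "card (cosets Y X) * card (cosets X (pimod p X)) = card (cosets Y (pimod p X))"
    using card_index_tower[OF sub(1,3,4) incl(1) XY] by simp
  also have "\<dots> = card (cosets Y X) * card (cosets Y (pimod p Y))"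
    using card_index_tower[OF sub(1,2,4) incl(3,2)] card_cosets_pimod(1)[OF X] by simp
  finally have eq: "card (cosets Y X) * card (cosets X (pimod p X))
      = card (cosets Y X) * card (cosets Y (pimod p Y))" .
  have "finite (cosets Y X)"
    using fin finite_index_tower_iff[OF sub(1,3,4) incl(1) XY] by blast
  moreover have "cosets Y X \<noteq> {}" using submodule_zero[OF Y] by blast
  ultimately have "card (cosets Y X) \<noteq> 0" by simp
  then show ?thesis using eq by simp
qed

lemma kbasis_Int_transfer:
  assumes X: "submodule X" and Y: "submodule Y" and N: "submodule N"
    and XY: "X \<subseteq> Y" and YN: "Y \<subseteq> X + N" and b: "kbasis X (X \<inter> N) m bs"
  shows "kbasis Y (Y \<inter> N) m bs"
  unfolding kbasis_def
proof (intro conjI allI ballI impI)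
  show "bs i \<in> Y" if "i < m" for i using kbasis_mem[OF b that] XY by blast
  show "\<exists>a. y - lincomb m a bs \<in> Y \<inter> N" if y: "y \<in> Y" for y
  proof -
    obtain x n where xn: "x \<in> X" "n \<in> N" "y = x + n" using y YN unfolding set_plus_def by blast
    obtain a where a: "x - lincomb m a bs \<in> X \<inter> N" using kbasis_span[OF b xn(1)] by blast
    have "(x - lincomb m a bs) + n \<in> N" using a submodule_add[OF N] xn(2) by blast
    then have "y - lincomb m a bs \<in> N" using xn(3) by (simp add: diff_add_eq)
    moreover have "y - lincomb m a bs \<in> Y"
      using submodule_diff[OF Y y] kbasis_lincomb_mem[OF X b] XY by blast
    ultimately show ?thesis by blast
  qed
  show "a i \<in> pideal p" if "lincomb m a bs \<in> Y \<inter> N" "i < m" for a i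
    using that kbasis_indep[OF b, of a] kbasis_lincomb_mem[OF X b, of a] by blast
qed

lemma basis_iso_congruent:
  assumes X: "submodule X" and Y: "submodule Y" and N: "submodule N" and XN: "pimod p X \<subseteq> N"
    and bX: "kbasis X (pimod p X) d bX" and bY: "kbasis Y (pimod p Y) d bY"
    and diff: "\<And>i. i < d \<Longrightarrow> bY i - bX i \<in> N" and x: "x \<in> X"
  shows "\<exists>y\<in>Y. basis_iso (pimod p X) (pimod p Y) d bX bY (x +o pimod p X) = y +o pimod p Y
           \<and> y - x \<in> N"
proof -
  note ksX = kspace_pimod[OF X] and ksY = kspace_pimod[OF Y]
  obtain a where a: "x +o pimod p X = lincomb d a bX +o pimod p X"
    using x cosets_eq_range_lincomb[OF ksX bX] by blast
  have "x - lincomb d a bX \<in> pimod p X"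
    using a coset_eq_iff[OF submodule_add_subgroup[OF submodule_pimod[OF X]]] by simp
  moreover have "lincomb d a bY - lincomb d a bX \<in> N"
    unfolding lincomb_diff_vectors by (rule lincomb_mem[OF N diff])
  ultimately have "(lincomb d a bY - lincomb d a bX) - (x - lincomb d a bX) \<in> N"
    using submodule_diff[OF N] XN by blast
  then have "lincomb d a bY - x \<in> N" by simp
  moreover have "basis_iso (pimod p X) (pimod p Y) d bX bY (x +o pimod p X) = lincomb d a bY +o pimod p Y"
    unfolding a by (rule basis_iso_lincomb[OF ksX ksY bX bY])
  ultimately show ?thesis using kbasis_lincomb_mem[OF Y bY] by blast
qed

lemma finite_cosets_Int_pimod:
  assumes T: "submodule T" and N: "submodule N" and TN: "pimod p T \<subseteq> N"
    and fin: "finite (cosets T (pimod p T))"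
  shows "finite (cosets T (T \<inter> N))" and "finite (cosets (T \<inter> N) (pimod p T))"
proof -
  have "add_subgroup (pimod p T)" "add_subgroup (T \<inter> N)" "add_subgroup T"
    using T N by (simp_all add: submodule_add_subgroup submodule_pimod submodule_Int)
  moreover have "pimod p T \<subseteq> T \<inter> N" using pimod_subset[OF T] TN by blast
  ultimately show "finite (cosets T (T \<inter> N))" and "finite (cosets (T \<inter> N) (pimod p T))"
    using finite_index_tower_iff[of "pimod p T" "T \<inter> N" T] fin by blast+
qed

lemma exists_congruent_kbases:
  assumes X: "submodule X" and Y: "submodule Y" and N: "submodule N"
    and XY: "X \<subseteq> Y" and YN: "Y \<subseteq> X + N" and YpN: "pimod p Y \<subseteq> N"
    and fin: "finite (cosets Y (pimod p X))"
  obtains d bX bY where "kbasis X (pimod p X) d bX" and "kbasis Y (pimod p Y) d bY"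
    and "\<And>i. i < d \<Longrightarrow> bY i - bX i \<in> N"
proof -
  have XpN: "pimod p X \<subseteq> N" using pimod_mono[OF XY] YpN by blast
  note ksXN = kspace_Int[OF X N XpN] and ksYN = kspace_Int[OF Y N YpN]
  have "finite (cosets X (pimod p X))" using finite_subset[OF image_mono[OF XY] fin] .
  note finX = finite_cosets_Int_pimod[OF X N XpN this]
  have "finite (cosets Y (pimod p Y))"
    using fin finite_index_tower_iff[of "pimod p X" "pimod p Y" Y] X Y pimod_mono[OF XY] pimod_subset[OF Y]
    by (simp add: submodule_add_subgroup submodule_pimod)
  note finY = finite_cosets_Int_pimod[OF Y N YpN this]
  obtain m bs where bs: "kbasis X (X \<inter> N) m bs"
    using kbasis_exists[OF ksXN(1) finX(1)] by blast
  obtain e ds where ds: "kbasis (X \<inter> N) (pimod p X) e ds"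
    using kbasis_exists[OF ksXN(2) finX(2)] by blast
  obtain e' ds' where ds': "kbasis (Y \<inter> N) (pimod p Y) e' ds'"
    using kbasis_exists[OF ksYN(2) finY(2)] by blast
  have bX: "kbasis X (pimod p X) (m + e) (concat_at m bs ds)"
    using kbasis_concat_at[OF kspace_pimod[OF X] submodule_Int[OF X N] _ _ bs ds] XpN pimod_subset[OF X]
    by blast
  have bY: "kbasis Y (pimod p Y) (m + e') (concat_at m bs ds')"
    using kbasis_concat_at[OF kspace_pimod[OF Y] submodule_Int[OF Y N] _ _
        kbasis_Int_transfer[OF X Y N XY YN bs] ds'] YpN pimod_subset[OF Y]
    by blast
  have "q ^ (m + e) = q ^ (m + e')"
    using card_cosets_pimod_eq[OF X Y XY fin]
      card_cosets_kbasis[OF kspace_pimod[OF X] bX] card_cosets_kbasis[OF kspace_pimod[OF Y] bY]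
    by simp
  then have "e' = e" using two_le_q by (simp add: power_inject_exp)
  moreover have "concat_at m bs ds' i - concat_at m bs ds i \<in> N" if "i < m + e" for i
    using that kbasis_mem[OF ds] kbasis_mem[OF ds'] submodule_diff[OF N] submodule_zero[OF N]
    by (auto simp: concat_at_def \<open>e' = e\<close>)
  ultimately show ?thesis using that bX bY by blast
qed

lemma exists_quotient_iso_congruent:
  assumes X: "submodule X" and Y: "submodule Y" and N: "submodule N"
    and XY: "X \<subseteq> Y" and YN: "Y \<subseteq> X + N" and YpN: "pimod p Y \<subseteq> N"
    and fin: "finite (cosets Y (pimod p X))"
  obtains F where "quotient_iso X (pimod p X) Y (pimod p Y) F"
    and "\<And>x. x \<in> X \<Longrightarrow> \<exists>y\<in>Y. F (x +o pimod p X) = y +o pimod p Y \<and> y - x \<in> N"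
proof -
  obtain d bX bY where bX: "kbasis X (pimod p X) d bX" and bY: "kbasis Y (pimod p Y) d bY"
    and diff: "\<And>i. i < d \<Longrightarrow> bY i - bX i \<in> N"
    using exists_congruent_kbases[OF assms] by blast
  have XpN: "pimod p X \<subseteq> N" using pimod_mono[OF XY] YpN by blast
  show ?thesis
  proof (rule that)
    show "quotient_iso X (pimod p X) Y (pimod p Y) (basis_iso (pimod p X) (pimod p Y) d bX bY)"
      by (rule quotient_iso_basis_iso[OF kspace_pimod[OF X] kspace_pimod[OF Y] bX bY])
    show "\<exists>y\<in>Y. basis_iso (pimod p X) (pimod p Y) d bX bY (x +o pimod p X) = y +o pimod p Y
        \<and> y - x \<in> N" if "x \<in> X" for x
      by (rule basis_iso_congruent[OF X Y N XpN bX bY diff that])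
  qed
qed

lemma quotient_iso_image_cosets_Int:
  assumes iso: "quotient_iso X (pimod p X) Y (pimod p Y) F"
    and cong: "\<And>x. x \<in> X \<Longrightarrow> \<exists>y\<in>Y. F (x +o pimod p X) = y +o pimod p Y \<and> y - x \<in> N"
    and Y: "submodule Y" and YpN: "pimod p Y \<subseteq> N" and M: "submodule M" and NM: "N \<subseteq> M"
  shows "F ` cosets (X \<inter> M) (pimod p X) = cosets (Y \<inter> M) (pimod p Y)"
proof (intro equalityI subsetI)
  fix C assume "C \<in> F ` cosets (X \<inter> M) (pimod p X)"
  then obtain x where x: "x \<in> X" "x \<in> M" "C = F (x +o pimod p X)" by blast
  obtain y where y: "y \<in> Y" "F (x +o pimod p X) = y +o pimod p Y" "y - x \<in> N" using cong[OF x(1)] by blast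
  have "(y - x) + x \<in> M" using submodule_add[OF M] y(3) NM x(2) by blast
  then show "C \<in> cosets (Y \<inter> M) (pimod p Y)" using x(3) y(1,2) by auto
next
  fix C assume "C \<in> cosets (Y \<inter> M) (pimod p Y)"
  then obtain y where y: "y \<in> Y" "y \<in> M" "C = y +o pimod p Y" by blast
  have "bij_betw F (cosets X (pimod p X)) (cosets Y (pimod p Y))"
    using iso unfolding quotient_iso_def by (rule conjunct1)
  then have "C \<in> F ` cosets X (pimod p X)"
    using y(1,3) by (simp add: bij_betw_imp_surj_on)
  then obtain x where x: "x \<in> X" "C = F (x +o pimod p X)" by blast
  obtain y' where y': "y' \<in> Y" "F (x +o pimod p X) = y' +o pimod p Y" "y' - x \<in> N"
    using cong[OF x(1)] by blast
  have "y' +o pimod p Y = y +o pimod p Y" using x(2) y'(2) y(3) by simp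
  then have "y' - y \<in> N"
    using YpN coset_eq_iff[OF submodule_add_subgroup[OF submodule_pimod[OF Y]]] by blast
  then have "y + ((y' - y) - (y' - x)) \<in> M"
    using y'(3) y(2) NM submodule_diff[OF M] submodule_add[OF M] by blast
  then show "C \<in> F ` cosets (X \<inter> M) (pimod p X)" using x by auto
qed

section \<open>The lattices M_j and finite colength\<close>

lemma submodule_Mlat: "submodule (Mlat p r c j)"
  unfolding submodule_def Mlat_def
proof (intro conjI ballI allI)
  show "0 \<in> {v \<in> vecs r. \<forall>s<r. c s < j \<longrightarrow> v s \<in> pideal p}"
    using add_subgroup_pideal by (simp add: vecs_def add_subgroup_def)
  show "x + y \<in> {v \<in> vecs r. \<forall>s<r. c s < j \<longrightarrow> v s \<in> pideal p}"
    if "x \<in> {v \<in> vecs r. \<forall>s<r. c s < j \<longrightarrow> v s \<in> pideal p}"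
       "y \<in> {v \<in> vecs r. \<forall>s<r. c s < j \<longrightarrow> v s \<in> pideal p}" for x y
    using that add_subgroup_pideal by (simp add: vecs_def add_subgroup_def)
  show "vsmult a x \<in> {v \<in> vecs r. \<forall>s<r. c s < j \<longrightarrow> v s \<in> pideal p}"
    if "x \<in> {v \<in> vecs r. \<forall>s<r. c s < j \<longrightarrow> v s \<in> pideal p}" for a x
    using that pideal_mult_left by (simp add: vecs_def vsmult_def)
qed

lemma pimod_vecs: "pimod p (vecs r) = {v \<in> vecs r. \<forall>s. v s \<in> pideal p}"
proof (intro equalityI subsetI)
  fix v assume "v \<in> pimod p (vecs r)"
  then show "v \<in> {v \<in> vecs r. \<forall>s. v s \<in> pideal p}"
    by (auto simp: pimod_def vecs_def vsmult_def mem_pideal_iff)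
next
  fix v assume v: "v \<in> {v \<in> vecs r. \<forall>s. v s \<in> pideal p}"
  define u where "u s = (SOME u. v s = p * u)" for s
  have vu: "v s = p * u s" for s
    using v someI_ex[of "\<lambda>u. v s = p * u"] unfolding u_def mem_pideal_iff by blast
  then have "u \<in> vecs r" using v nonzero by (auto simp: vecs_def)
  moreover have "v = vsmult p u" using vu by (simp add: vsmult_def fun_eq_iff)
  ultimately show "v \<in> pimod p (vecs r)" unfolding pimod_def by blast
qed

lemma pimod_subset_Mlat: "X \<subseteq> vecs r \<Longrightarrow> pimod p X \<subseteq> Mlat p r c j"
  using pimod_mono[of X "vecs r"] unfolding pimod_vecs Mlat_def by blast

lemma finite_cosets_pimod_vecs: "finite (cosets (vecs r) (pimod p (vecs r)))"
proof -
  let ?residues = "\<lambda>v. restrict (\<lambda>s. v s +o pideal p) {..<r}"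
  have "v +o pimod p (vecs r) = w +o pimod p (vecs r) \<longleftrightarrow> ?residues v = ?residues w"
    if "v \<in> vecs r" "w \<in> vecs r" for v w
  proof -
    have "v - w \<in> vecs r" using that by (simp add: vecs_def)
    moreover have high: "v s - w s \<in> pideal p" if "s \<ge> r" for s
      using that \<open>v - w \<in> vecs r\<close> add_subgroup_pideal by (simp add: vecs_def add_subgroup_def)
    then have "(\<forall>s. (v - w) s \<in> pideal p) \<longleftrightarrow> (\<forall>s<r. v s - w s \<in> pideal p)"
      by (metis linorder_not_le minus_apply)
    ultimately have "v - w \<in> pimod p (vecs r) \<longleftrightarrow> (\<forall>s<r. v s - w s \<in> pideal p)"
      unfolding pimod_vecs by blast
    then show ?thesis
      by (auto simp: coset_eq_iff submodule_add_subgroup submodule_pimod submodule_vecs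
          coset_eq_iff[OF add_subgroup_pideal, symmetric] fun_eq_iff)
  qed
  moreover have "?residues ` vecs r \<subseteq> (\<Pi>\<^sub>E s\<in>{..<r}. residue_classes p)"
    by (auto simp: restrict_PiE_iff residue_classes_eq_cosets)
  then have "finite (?residues ` vecs r)"
    by (rule finite_subset) (simp add: finite_PiE finite_residue_classes)
  ultimately show ?thesis
    using card_image_eq_if_same_fibres(2)[of "vecs r" "\<lambda>v. v +o pimod p (vecs r)" ?residues] by blast
qed

lemma finite_cosets_pimod_of_finite_colength:
  assumes X: "left_submodule r X" and fin: "finite_colength r X"
  shows "finite (cosets (vecs r) (pimod p X))"
proof -
  have X': "submodule X" "X \<subseteq> vecs r" using X by (simp_all add: left_submodule_iff)
  have sub: "add_subgroup (pimod p X)" "add_subgroup (pimod p (vecs r))" "add_subgroup (vecs r)"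
    by (simp_all add: submodule_add_subgroup submodule_pimod X'(1) submodule_vecs)
  have "finite (cosets (pimod p (vecs r)) (pimod p X))"
    using fin card_cosets_pimod(2)[OF X'(1)]
    by (simp add: finite_colength_def vcoset_eq_elt_set_plus)
  then show ?thesis
    using finite_index_tower_iff[OF sub pimod_mono[OF X'(2)] pimod_subset[OF submodule_vecs]]
      finite_cosets_pimod_vecs by blast
qed

end

theorem propositionB2:
  fixes p :: "'a::ring_1_no_zero_divisors"
    and n r :: nat and c :: "nat \<Rightarrow> nat"
    and X1 :: "(nat \<Rightarrow> 'a) set"
  assumes dvr: "nc_dvr p"
    and fin_res: "finite (residue_classes p)"
    and n: "n \<ge> 1" and r: "r \<ge> 1"
    and c_range: "\<forall>s<r. 1 \<le> c s \<and> c s \<le> n"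
    and c_mono: "\<forall>s t. s \<le> t \<longrightarrow> t < r \<longrightarrow> c s \<le> c t"
    and X1_sub: "left_submodule r X1"
    and X1_M1: "X1 \<subseteq> Mlat p r c 1"
    and X1_fin: "finite_colength r X1"
  shows "filtered_iso p r c n X1
           {vadd x (vsmult p m) | x m. x \<in> X1 \<and> m \<in> Mlat p r c 1}"
proof -
  interpret finite_residue_dvr p by (rule nc_dvr_imp_finite_residue_dvr[OF dvr fin_res])
  let ?M = "Mlat p r c" and ?Y = "X1 + pimod p (Mlat p r c 1)"
  have Y_eq: "{vadd x (vsmult p m) | x m. x \<in> X1 \<and> m \<in> ?M 1} = ?Y"
    by (auto simp: set_plus_def pimod_def vadd_eq_plus)
  have X: "submodule X1" "X1 \<subseteq> vecs r" using X1_sub by (simp_all add: left_submodule_iff)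
  have piM: "pimod p (?M 1) \<subseteq> ?M j" for j by (rule pimod_subset_Mlat[OF Mlat_subset_vecs])
  have Y: "submodule ?Y" by (simp add: submodule_set_plus submodule_pimod submodule_Mlat X)
  have XY: "X1 \<subseteq> ?Y" by (rule subset_set_plus_submodule[OF submodule_pimod[OF submodule_Mlat]])
  have YM1: "?Y \<subseteq> ?M 1" by (rule set_plus_subset_submodule[OF submodule_Mlat X1_M1 piM])
  then have YpN: "pimod p ?Y \<subseteq> ?M n" using Mlat_subset_vecs by (intro pimod_subset_Mlat) blast
  have YN: "?Y \<subseteq> X1 + ?M n" by (rule set_plus_mono2[OF order_refl piM])
  have "?Y \<subseteq> vecs r" using YM1 Mlat_subset_vecs by blast
  then have fin: "finite (cosets ?Y (pimod p X1))"
    by (rule finite_subset[OF image_mono finite_cosets_pimod_of_finite_colength[OF X1_sub X1_fin]])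
  obtain F where iso: "quotient_iso X1 (pimod p X1) ?Y (pimod p ?Y) F"
    and cong: "\<And>x. x \<in> X1 \<Longrightarrow> \<exists>y\<in>?Y. F (x +o pimod p X1) = y +o pimod p ?Y \<and> y - x \<in> ?M n"
    using exists_quotient_iso_congruent[OF X(1) Y submodule_Mlat XY YN YpN fin] by blast
  show ?thesis unfolding Y_eq
  proof (rule filtered_isoI[OF iso X1_M1 YM1])
    fix j assume "j \<in> {1..n}"
    then show "F ` cosets (X1 \<inter> ?M j) (pimod p X1) = cosets (?Y \<inter> ?M j) (pimod p ?Y)"
      by (intro quotient_iso_image_cosets_Int[OF iso cong Y YpN submodule_Mlat Mlat_antimono]) auto
  qed
qed

end
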